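(* Let $\mu\in(0,1]$ and let $G$, $H$ be two $k$-uniform hypergraphs such that there exists a homomorphism $\psi$ from $G$ to $H$. If $H$ has the $\mu$-fractional property, then so does $G$. In particular, if a $k$-uniform hypergraph has the $\mu$-fractional property, then so do all of its subhypergraphs.
   Context: A homomorphism from $G$ to $H$ is a map $\psi\colon V(G)\to V(H)$ such that $\psi[e]\in E(H)$ for every edge $e\in E(G)$. A $k$-uniform hypergraph $H$ has the $\mu$-fractional property if for every family $(w_i)_{i\in V(H)}$ of nonnegative real numbers there exists an independent set $Z\subseteq V(H)$ (a set containing no edge of $H$) such that $\sum_{i\in Z}w_i\geq\mu\sum_{i\in V(H)}w_i$. *)

theory Defs
  imports Complex_Main "HOL-Library.FuncSet"
begin

definition k_uniform_hypergraph :: "nat \<Rightarrow> 'a set \<Rightarrow> 'a set set \<Rightarrow> bool" where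
  "k_uniform_hypergraph k V E \<longleftrightarrow> finite V \<and> (\<forall>e\<in>E. e \<subseteq> V \<and> card e = k)"

definition hypergraph_hom :: "('a \<Rightarrow> 'b) \<Rightarrow> 'a set \<Rightarrow> 'a set set \<Rightarrow> 'b set \<Rightarrow> 'b set set \<Rightarrow> bool" where
  "hypergraph_hom psi VG EG VH EH \<longleftrightarrow> psi \<in> VG \<rightarrow> VH \<and> (\<forall>e\<in>EG. psi ` e \<in> EH)"

definition independent_set :: "'a set \<Rightarrow> 'a set set \<Rightarrow> 'a set \<Rightarrow> bool" where
  "independent_set V E Z \<longleftrightarrow> Z \<subseteq> V \<and> (\<forall>e\<in>E. \<not> e \<subseteq> Z)"

definition fractional_property :: "real \<Rightarrow> 'a set \<Rightarrow> 'a set set \<Rightarrow> bool" where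
  "fractional_property \<mu> V E \<longleftrightarrow>
     (\<forall>w :: 'a \<Rightarrow> real. (\<forall>i\<in>V. 0 \<le> w i) \<longrightarrow>
        (\<exists>Z. independent_set V E Z \<and> (\<Sum>i\<in>Z. w i) \<ge> \<mu> * (\<Sum>i\<in>V. w i)))"

end

theory Submission
  imports Defs
begin

text \<open>Given weights on \<open>G\<close>, give each vertex of \<open>H\<close> the total weight of its fibre under
  \<open>\<psi>\<close>. An independent set of \<open>H\<close> that is heavy for these weights pulls back to a set of
  vertices of \<open>G\<close> of the same weight, and the pullback is independent because an edge
  inside it would be mapped to an edge inside the independent set. A subhypergraph
  inherits the property because its inclusion is a homomorphism.\<close>

lemma sum_fibres_eq_sum_vimage:
  assumes "finite S" and "finite T"
  shows "(\<Sum>y\<in>T. \<Sum>x\<in>{x\<in>S. g x = y}. h x) = (\<Sum>x\<in>{x\<in>S. g x \<in> T}. h x)"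
proof -
  have "(\<Sum>y\<in>T. \<Sum>x\<in>{x\<in>{x\<in>S. g x \<in> T}. g x = y}. h x) = (\<Sum>x\<in>{x\<in>S. g x \<in> T}. h x)"
    using assms by (intro sum.group) auto
  moreover have "{x\<in>{x\<in>S. g x \<in> T}. g x = y} = {x\<in>S. g x = y}" if "y \<in> T" for y
    using that by auto
  ultimately show ?thesis
    by (metis (no_types, lifting) sum.cong)
qed

lemma independent_set_vimage:
  assumes "hypergraph_hom psi VG EG VH EH" and "independent_set VH EH Z"
  shows "independent_set VG EG {x\<in>VG. psi x \<in> Z}"
  unfolding independent_set_def
proof safe
  fix e assume "e \<in> EG" and "e \<subseteq> {x\<in>VG. psi x \<in> Z}"
  then have "psi ` e \<in> EH" and "psi ` e \<subseteq> Z"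
    using assms(1) unfolding hypergraph_hom_def by auto
  then show False
    using assms(2) unfolding independent_set_def by blast
qed

lemma fractional_property_hom:
  assumes "finite VG" and "finite VH"
    and hom: "hypergraph_hom psi VG EG VH EH"
    and "fractional_property \<mu> VH EH"
  shows "fractional_property \<mu> VG EG"
  unfolding fractional_property_def
proof (intro allI impI)
  fix w :: "'a \<Rightarrow> real" assume "\<forall>i\<in>VG. 0 \<le> w i"
  define w' where "w' j = (\<Sum>i\<in>{i\<in>VG. psi i = j}. w i)" for j
  have "\<forall>j\<in>VH. 0 \<le> w' j"
    unfolding w'_def using \<open>\<forall>i\<in>VG. 0 \<le> w i\<close> by (auto intro: sum_nonneg)
  then obtain Z where Z: "independent_set VH EH Z" and heavy: "\<mu> * (\<Sum>j\<in>VH. w' j) \<le> (\<Sum>j\<in>Z. w' j)"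
    using assms(4) unfolding fractional_property_def by blast
  have "finite Z"
    using Z \<open>finite VH\<close> unfolding independent_set_def by (auto intro: finite_subset)
  have "(\<Sum>j\<in>Z. w' j) = (\<Sum>i\<in>{i\<in>VG. psi i \<in> Z}. w i)"
    unfolding w'_def using \<open>finite VG\<close> \<open>finite Z\<close> by (rule sum_fibres_eq_sum_vimage)
  moreover have "{i\<in>VG. psi i \<in> VH} = VG"
    using hom unfolding hypergraph_hom_def by auto
  then have "(\<Sum>j\<in>VH. w' j) = (\<Sum>i\<in>VG. w i)"
    unfolding w'_def using sum_fibres_eq_sum_vimage[OF \<open>finite VG\<close> \<open>finite VH\<close>, where g = psi and h = w] by simp
  ultimately show "\<exists>Z. independent_set VG EG Z \<and> \<mu> * (\<Sum>i\<in>VG. w i) \<le> (\<Sum>i\<in>Z. w i)"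
    using independent_set_vimage[OF hom Z] heavy by metis
qed

lemma hypergraph_hom_inclusion:
  assumes "V' \<subseteq> V" and "E' \<subseteq> E"
  shows "hypergraph_hom (\<lambda>x. x) V' E' V E"
  using assms unfolding hypergraph_hom_def by auto

theorem lemma3p2:
  fixes \<mu> :: real and k :: nat
    and VG :: "'a set" and EG :: "'a set set"
    and VH :: "'b set" and EH :: "'b set set"
    and psi :: "'a \<Rightarrow> 'b"
  assumes "0 < \<mu>" and "\<mu> \<le> 1"
    and "k_uniform_hypergraph k VG EG" and "k_uniform_hypergraph k VH EH"
    and "hypergraph_hom psi VG EG VH EH"
    and "fractional_property \<mu> VH EH"
  shows "fractional_property \<mu> VG EG \<and>
         (\<forall>V' E'. V' \<subseteq> VH \<and> E' \<subseteq> EH \<and> (\<forall>e\<in>E'. e \<subseteq> V') \<longrightarrow>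
                  fractional_property \<mu> V' E')"
proof -
  have "finite VG" and "finite VH"
    using assms(3,4) unfolding k_uniform_hypergraph_def by auto
  have "fractional_property \<mu> V' E'" if "V' \<subseteq> VH" and "E' \<subseteq> EH" for V' E'
    using fractional_property_hom[OF finite_subset[OF that(1) \<open>finite VH\<close>] \<open>finite VH\<close>
        hypergraph_hom_inclusion[OF that] assms(6)] .
  then show ?thesis
    using fractional_property_hom[OF \<open>finite VG\<close> \<open>finite VH\<close> assms(5,6)] by blast
qed

end
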